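(* For $n\ge2$ and $k_1,\dots,k_n\in\mathbb Z\setminus\{0\}$ with $k=\sum_{j=1}^nk_j\neq0$, let $H_n=k^3-\sum_{j=1}^nk_j^3$, $k_{\max}=\max_j|k_j|$, and let $k_{\max_j}$ be the $j$-th largest element of $\{|k_1|,\dots,|k_n|\}$. There is a constant $c>0$ depending only on $n$ such that: (1) If $n=2$: $|H_2|\ge c\,k_{\max}^2$. (2) If $n=3$: at least one of the following holds: (A) $|H_3|\ge c\,k_{\max}^2$; (B) $k_{j_0}=k$ for some $j_0\in\{1,2,3\}$; (C) $|k_j|\ge c|k|$ for all $j\in\{1,2,3\}$. (3) If $n\ge4$: at least one of the following holds: (A) $|H_n|\ge c\,k_{\max}^2$; (B) $k=k_{j_0}$ for some $j_0\in\{1,\dots,n\}$; (C) $k_{\max_3}\ge c|k|$; (D) $k_{\max_3}^2k_{\max_4}\ge c\,k_{\max}^2$. *)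

theory Defs
  imports Complex_Main
begin

text \<open>The tuple (k_1,...,k_n) is represented as a list ks of length n
  (ks ! (j-1) = k_j).\<close>

definition Hn :: "int list \<Rightarrow> int" where
  "Hn ks = (sum_list ks) ^ 3 - sum_list (map (\<lambda>x. x ^ 3) ks)"

definition kmax :: "int list \<Rightarrow> int" where
  "kmax ks = Max (abs ` set ks)"

text \<open>kmaxj ks j: the j-th largest (1-indexed, counted with multiplicity)
  of the values |k_1|,...,|k_n|.\<close>
definition kmaxj :: "int list \<Rightarrow> nat \<Rightarrow> int" where
  "kmaxj ks j = rev (sort (map abs ks)) ! (j - 1)"

end

theory Submission
  imports Defs "HOL-Library.Multiset"
begin

(* Order the k_j by decreasing absolute value as a, b followed by a tail with sum r, so that
   k = a + b + r. The identity k^3 - a^3 - b^3 - r^3 = 3 (a + b) (a + r) (b + r) gives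
     H_n = 3 (a + b) (a + r) (b + r) + H(tail).
   If 4 |r| <= |a|, then |a + r| >= |a|/2, and of the nonzero integers a + b and b + r one has
   absolute value at least |a|/4 (a + b if 2 |b| <= |a|, b + r otherwise), so the product is at
   least a^2/8 in absolute value. Here a + b <> 0 since |r| < |k|, and b + r = k - a <> 0 unless
   (B) holds. For n = 2 and n = 3 the tail term vanishes and the failure of (C) makes r small;
   for n >= 4 the failure of (C) and (D) makes r small and H(tail) = O(k_max3^2 k_max4)
   negligible against a^2. The constant c = 1/(16 n^3) works in all cases. *)

lemma Hn_Cons: "Hn (x # xs) = 3 * x * sum_list xs * (x + sum_list xs) + Hn xs"
  unfolding Hn_def by (simp add: power3_eq_cube algebra_simps)

lemma Hn_Cons_Cons:
  "Hn (a # b # xs) = 3 * (a + b) * (a + sum_list xs) * (b + sum_list xs) + Hn xs"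
  unfolding Hn_def by (simp add: power3_eq_cube algebra_simps)

lemma sum_list_mset:
  fixes xs ys :: "'a::comm_monoid_add list"
  shows "mset xs = mset ys \<Longrightarrow> sum_list xs = sum_list ys"
  by (metis sum_mset_sum_list)

lemma kmax_mset: "mset xs = mset ys \<Longrightarrow> kmax xs = kmax ys"
  unfolding kmax_def by (metis mset_eq_setD)

lemma Hn_mset: "mset xs = mset ys \<Longrightarrow> Hn xs = Hn ys"
  unfolding Hn_def by (metis mset_map sum_mset_sum_list)

lemma kmaxj_mset: "mset xs = mset ys \<Longrightarrow> kmaxj xs = kmaxj ys"
  unfolding kmaxj_def by (metis mset_map sorted_list_of_multiset_mset)

abbreviation abs_sorted_desc :: "int list \<Rightarrow> bool" where
  "abs_sorted_desc \<equiv> sorted_wrt (\<lambda>x y. \<bar>y\<bar> \<le> \<bar>x\<bar>)"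

lemma abs_sorted_desc_perm:
  obtains ys where "mset ys = mset xs" "abs_sorted_desc ys"
proof
  show "mset (sort_key (\<lambda>x. - \<bar>x\<bar>) xs) = mset xs" by simp
  show "abs_sorted_desc (sort_key (\<lambda>x. - \<bar>x\<bar>) xs)"
    using sorted_sort_key[of "\<lambda>x. - \<bar>x\<bar>" xs] by (simp add: sorted_map)
qed

lemma kmax_abs_sorted_desc: "abs_sorted_desc (a # xs) \<Longrightarrow> kmax (a # xs) = \<bar>a\<bar>"
  unfolding kmax_def by (rule Max_eqI) auto

lemma kmaxj_abs_sorted_desc:
  assumes "abs_sorted_desc xs" "0 < j" "j \<le> length xs"
  shows "kmaxj xs j = \<bar>xs ! (j - 1)\<bar>"
proof -
  have "sorted (rev (map abs xs))"
    using assms(1) by (simp add: sorted_wrt_rev sorted_wrt_map)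
  then have "sort (map abs xs) = rev (map abs xs)"
    by (metis mset_rev sorted_list_of_multiset_mset sorted_sort_id)
  then show ?thesis unfolding kmaxj_def using assms(2,3) by simp
qed

lemma abs_sum_list_le:
  fixes xs :: "'a::linordered_idom list"
  assumes "\<forall>x\<in>set xs. \<bar>x\<bar> \<le> m"
  shows "\<bar>sum_list xs\<bar> \<le> of_nat (length xs) * m"
proof -
  have "\<bar>sum_list xs\<bar> \<le> (\<Sum>x\<leftarrow>xs. \<bar>x\<bar>)" by (rule sum_list_abs)
  also have "\<dots> \<le> (\<Sum>x\<leftarrow>xs. m)" using assms by (intro sum_list_mono) auto
  finally show ?thesis by (simp add: sum_list_triv)
qed

lemma abs_Hn_le:
  assumes "\<forall>x\<in>set xs. \<bar>x\<bar> \<le> m"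
  shows "\<bar>Hn xs\<bar> \<le> (int (length xs) ^ 3 + int (length xs)) * m ^ 3"
proof (cases "xs = []")
  case True
  then show ?thesis by (simp add: Hn_def)
next
  case False
  define l where "l = int (length xs)"
  have "0 \<le> m" using assms False by (metis abs_ge_zero last_in_set order_trans)
  have "\<bar>sum_list xs\<bar> \<le> l * m" using abs_sum_list_le[OF assms] by (simp add: l_def)
  then have "\<bar>sum_list xs ^ 3\<bar> \<le> (l * m) ^ 3" by (simp add: power_abs power_mono)
  moreover have "\<bar>\<Sum>x\<leftarrow>xs. x ^ 3\<bar> \<le> l * m ^ 3"
  proof -
    have "\<forall>y\<in>set (map (\<lambda>x. x ^ 3) xs). \<bar>y\<bar> \<le> m ^ 3"
      using assms by (auto simp: power_abs power_mono)
    from abs_sum_list_le[OF this] show ?thesis by (simp add: l_def)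
  qed
  ultimately show ?thesis
    unfolding Hn_def l_def[symmetric] by (simp add: algebra_simps)
qed

lemma abs_Hn_Cons_le:
  assumes "\<forall>x\<in>set xs. \<bar>x\<bar> \<le> m" "0 \<le> m" "m \<le> \<bar>y\<bar>"
  shows "\<bar>Hn (y # xs)\<bar> \<le> 2 * (int (length xs) + 1) ^ 3 * y ^ 2 * m"
proof -
  define l where "l = int (length xs)"
  define s where "s = sum_list xs"
  have "0 \<le> l" by (simp add: l_def)
  have s: "\<bar>s\<bar> \<le> l * m" using abs_sum_list_le[OF assms(1)] by (simp add: s_def l_def)
  have ys: "\<bar>y + s\<bar> \<le> (l + 1) * \<bar>y\<bar>"
  proof -
    have "l * m \<le> l * \<bar>y\<bar>" using assms(3) \<open>0 \<le> l\<close> by (rule mult_left_mono)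
    then show ?thesis using s abs_triangle_ineq[of y s] by (simp add: distrib_right)
  qed
  have "\<bar>3 * y * s * (y + s)\<bar> \<le> 3 * \<bar>y\<bar> * (l * m) * ((l + 1) * \<bar>y\<bar>)"
    unfolding abs_mult using s ys by (intro mult_mono) auto
  also have "\<dots> = 3 * l * (l + 1) * (y ^ 2 * m)"
    by (simp add: power2_eq_square mult_ac)
  finally have cross_term: "\<bar>3 * y * s * (y + s)\<bar> \<le> 3 * l * (l + 1) * (y ^ 2 * m)" .
  have "m ^ 3 \<le> y ^ 2 * m"
  proof -
    have "m ^ 2 \<le> y ^ 2" using power_mono[OF assms(3,2), of 2] by simp
    then show ?thesis using assms(2) by (simp add: power3_eq_cube power2_eq_square mult_right_mono)
  qed
  then have "(l ^ 3 + l) * m ^ 3 \<le> (l ^ 3 + l) * (y ^ 2 * m)"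
    using \<open>0 \<le> l\<close> by (intro mult_left_mono) auto
  with abs_Hn_le[OF assms(1)] have tail_term: "\<bar>Hn xs\<bar> \<le> (l ^ 3 + l) * (y ^ 2 * m)"
    by (simp add: l_def)
  have "\<bar>Hn (y # xs)\<bar> \<le> (3 * l * (l + 1) + (l ^ 3 + l)) * (y ^ 2 * m)"
    using cross_term tail_term unfolding Hn_Cons s_def[symmetric] distrib_right by linarith
  also have "\<dots> \<le> 2 * (l + 1) ^ 3 * (y ^ 2 * m)"
    using \<open>0 \<le> l\<close> assms(2)
    by (intro mult_right_mono) (auto simp: power3_eq_cube power2_eq_square algebra_simps)
  finally show ?thesis by (simp add: l_def mult.assoc)
qed

lemma sq_le_triple_product:
  fixes a b r :: int
  assumes "\<bar>b\<bar> \<le> \<bar>a\<bar>" "4 * \<bar>r\<bar> \<le> \<bar>a\<bar>" "a + b \<noteq> 0" "b + r \<noteq> 0"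
  shows "a ^ 2 \<le> 8 * \<bar>(a + b) * (a + r) * (b + r)\<bar>"
proof -
  have ar: "\<bar>a\<bar> \<le> 2 * \<bar>a + r\<bar>" using assms(2) by (smt (verit))
  have "\<bar>a\<bar> * \<bar>a\<bar> \<le> 8 * (\<bar>a + b\<bar> * \<bar>a + r\<bar> * \<bar>b + r\<bar>)"
  proof (cases "2 * \<bar>b\<bar> \<le> \<bar>a\<bar>")
    case True
    then have ab: "\<bar>a\<bar> \<le> 2 * \<bar>a + b\<bar>" by (smt (verit))
    have "\<bar>a\<bar> * \<bar>a\<bar> \<le> (2 * \<bar>a + b\<bar>) * (2 * \<bar>a + r\<bar>)"
      using ab ar by (intro mult_mono) auto
    also have "\<dots> \<le> (2 * \<bar>a + b\<bar>) * (2 * \<bar>a + r\<bar>) * \<bar>b + r\<bar>"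
      using mult_left_mono[of 1 "\<bar>b + r\<bar>"] assms(4) by force
    finally have "\<bar>a\<bar> * \<bar>a\<bar> \<le> 4 * (\<bar>a + b\<bar> * \<bar>a + r\<bar> * \<bar>b + r\<bar>)"
      by (simp add: mult_ac)
    moreover have "0 \<le> \<bar>a + b\<bar> * \<bar>a + r\<bar> * \<bar>b + r\<bar>" by simp
    ultimately show ?thesis by linarith
  next
    case False
    then have br: "\<bar>a\<bar> \<le> 4 * \<bar>b + r\<bar>" using assms(2) by (smt (verit))
    have "\<bar>a\<bar> * \<bar>a\<bar> \<le> (2 * \<bar>a + r\<bar>) * (4 * \<bar>b + r\<bar>)"
      using br ar by (intro mult_mono) auto
    also have "\<dots> \<le> (2 * \<bar>a + r\<bar>) * (4 * \<bar>b + r\<bar>) * \<bar>a + b\<bar>"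
      using mult_left_mono[of 1 "\<bar>a + b\<bar>"] assms(3) by force
    finally show ?thesis by (simp add: mult_ac)
  qed
  then show ?thesis by (simp add: abs_mult power2_eq_square)
qed

lemma sq_le_Hn_Cons_Cons:
  fixes a b :: int
  assumes "\<bar>b\<bar> \<le> \<bar>a\<bar>" "4 * \<bar>sum_list xs\<bar> \<le> \<bar>a\<bar>" "a + b \<noteq> 0" "b + sum_list xs \<noteq> 0"
    and "8 * \<bar>Hn xs\<bar> \<le> a ^ 2"
  shows "a ^ 2 \<le> 4 * \<bar>Hn (a # b # xs)\<bar>"
proof -
  define P where "P = (a + b) * (a + sum_list xs) * (b + sum_list xs)"
  have "3 * a ^ 2 \<le> 8 * \<bar>3 * P\<bar>"
    using sq_le_triple_product[OF assms(1-4)] by (simp add: P_def abs_mult)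
  also have "\<dots> \<le> 8 * \<bar>Hn (a # b # xs)\<bar> + 8 * \<bar>Hn xs\<bar>"
  proof -
    have "3 * P = Hn (a # b # xs) - Hn xs"
      unfolding Hn_Cons_Cons P_def by (simp only: mult.assoc add_diff_cancel_right')
    then show ?thesis using abs_triangle_ineq4[of "Hn (a # b # xs)" "Hn xs"] by simp
  qed
  finally show ?thesis using assms(5) by linarith
qed

lemma kmax_sq_le_Hn_length_2:
  assumes "length ks = 2" "\<forall>x\<in>set ks. x \<noteq> 0" "sum_list ks \<noteq> 0"
  shows "kmax ks ^ 2 \<le> 4 * \<bar>Hn ks\<bar>"
proof -
  obtain ys where ys: "mset ys = mset ks" "abs_sorted_desc ys" by (rule abs_sorted_desc_perm)
  then obtain a b where ab: "ys = [a, b]"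
    using assms(1) by (auto simp: numeral_2_eq_2 length_Suc_conv dest!: mset_eq_length)
  have "set ks = {a, b}" using ys(1) ab by (metis mset_eq_setD list.set(1,2))
  have "a ^ 2 \<le> 4 * \<bar>Hn [a, b]\<bar>"
    using sq_le_Hn_Cons_Cons[of b a "[]"] ys(2) assms(2,3) \<open>set ks = {a, b}\<close> ab
      sum_list_mset[OF ys(1)]
    by (simp add: Hn_def)
  then show ?thesis
    using kmax_mset[OF ys(1)] Hn_mset[OF ys(1)] kmax_abs_sorted_desc[of a "[b]"] ys(2) ab by simp
qed

lemma kmax_sq_le_Hn_length_3:
  assumes "length ks = 3" "sum_list ks \<notin> set ks" "12 \<le> N"
    and "\<exists>x\<in>set ks. N * \<bar>x\<bar> < \<bar>sum_list ks\<bar>"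
  shows "kmax ks ^ 2 \<le> 4 * \<bar>Hn ks\<bar>"
proof -
  obtain ys where ys: "mset ys = mset ks" "abs_sorted_desc ys" by (rule abs_sorted_desc_perm)
  then obtain a b y where aby: "ys = [a, b, y]"
    using assms(1) by (auto simp: numeral_3_eq_3 length_Suc_conv dest!: mset_eq_length)
  have set_ks: "set ks = {a, b, y}" using ys(1) aby by (metis mset_eq_setD list.set(1,2))
  have sum_ks: "sum_list ks = a + b + y" using sum_list_mset[OF ys(1)] aby by simp
  have sorted: "\<bar>b\<bar> \<le> \<bar>a\<bar>" "\<bar>y\<bar> \<le> \<bar>b\<bar>" using ys(2) aby by auto
  have "N * \<bar>y\<bar> < \<bar>a + b + y\<bar>"
  proof -
    obtain x where "x \<in> {a, b, y}" "N * \<bar>x\<bar> < \<bar>a + b + y\<bar>" using assms(4) set_ks sum_ks by auto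
    moreover have "N * \<bar>y\<bar> \<le> N * \<bar>x\<bar>" if "x \<in> {a, b, y}"
      using that sorted assms(3) by (auto intro: mult_left_mono)
    ultimately show ?thesis by fastforce
  qed
  moreover have "12 * \<bar>y\<bar> \<le> N * \<bar>y\<bar>" using assms(3) by (intro mult_right_mono) auto
  moreover have "\<bar>a + b + y\<bar> \<le> 3 * \<bar>a\<bar>" using sorted by (smt (verit))
  ultimately have "4 * \<bar>y\<bar> \<le> \<bar>a\<bar>" "\<bar>y\<bar> < \<bar>a + b + y\<bar>" by linarith+
  moreover have "b + y \<noteq> 0" using assms(2) set_ks sum_ks by auto
  ultimately have "a ^ 2 \<le> 4 * \<bar>Hn [a, b, y]\<bar>"
    using sq_le_Hn_Cons_Cons[of b a "[y]"] sorted(1) by (force simp: Hn_def)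
  then show ?thesis
    using kmax_mset[OF ys(1)] Hn_mset[OF ys(1)] kmax_abs_sorted_desc[of a "[b, y]"] ys(2) aby by simp
qed

lemma sq_le_Hn_abs_sorted_desc:
  fixes a b y z :: int and zs :: "int list"
  defines "r \<equiv> sum_list (y # z # zs)" and "p \<equiv> int (length (y # z # zs))"
  assumes sorted: "abs_sorted_desc (a # b # y # z # zs)"
    and "z \<noteq> 0" "b + r \<noteq> 0" "16 * p ^ 3 \<le> N"
    and C: "N * \<bar>y\<bar> < \<bar>a + b + r\<bar>" and D: "N * (y ^ 2 * \<bar>z\<bar>) < a ^ 2"
  shows "a ^ 2 \<le> 4 * \<bar>Hn (a # b # y # z # zs)\<bar>"
proof -
  have tail: "\<forall>x\<in>set (y # z # zs). \<bar>x\<bar> \<le> \<bar>y\<bar>" using sorted by auto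
  have "2 \<le> p" by (simp add: p_def)
  then have "p \<le> p ^ 3" "p ^ 2 \<le> p ^ 3" "0 < p ^ 3"
    using power_increasing[of 1 3 p] power_increasing[of 2 3 p] by simp_all
  then have "p \<le> N" "16 * p ^ 2 \<le> N" "0 < N" using \<open>16 * p ^ 3 \<le> N\<close> by linarith+
  have r: "\<bar>r\<bar> \<le> p * \<bar>y\<bar>" using abs_sum_list_le[OF tail] by (simp add: r_def p_def)
  have "16 * p ^ 2 * y ^ 2 \<le> N * y ^ 2"
    using \<open>16 * p ^ 2 \<le> N\<close> by (intro mult_right_mono) auto
  also have "\<dots> \<le> N * (y ^ 2 * \<bar>z\<bar>)"
    using mult_left_mono[of 1 "\<bar>z\<bar>" "y ^ 2"] \<open>z \<noteq> 0\<close> \<open>0 < N\<close> by (intro mult_left_mono) auto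
  finally have "(4 * p * \<bar>y\<bar>) ^ 2 < \<bar>a\<bar> ^ 2"
    using D by (simp add: power_mult_distrib)
  then have "4 * \<bar>r\<bar> \<le> \<bar>a\<bar>" using r power_less_imp_less_base[of "4 * p * \<bar>y\<bar>" 2 "\<bar>a\<bar>"] by simp
  moreover have "\<bar>r\<bar> < \<bar>a + b + r\<bar>"
    using r C mult_right_mono[OF \<open>p \<le> N\<close>, of "\<bar>y\<bar>"] by linarith
  moreover have "8 * \<bar>Hn (y # z # zs)\<bar> \<le> a ^ 2"
  proof -
    have "\<bar>Hn (y # z # zs)\<bar> \<le> 2 * p ^ 3 * y ^ 2 * \<bar>z\<bar>"
      using abs_Hn_Cons_le[of "z # zs" "\<bar>z\<bar>" y] sorted by (simp add: p_def add.commute)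
    moreover have "16 * p ^ 3 * (y ^ 2 * \<bar>z\<bar>) \<le> N * (y ^ 2 * \<bar>z\<bar>)"
      using \<open>16 * p ^ 3 \<le> N\<close> by (intro mult_right_mono) auto
    ultimately show ?thesis using D by (simp add: mult.assoc)
  qed
  ultimately show ?thesis
    using sq_le_Hn_Cons_Cons[of b a "y # z # zs"] sorted \<open>b + r \<noteq> 0\<close> unfolding r_def by force
qed

lemma kmax_sq_le_Hn_length_ge_4:
  assumes "4 \<le> length ks" "\<forall>x\<in>set ks. x \<noteq> 0" "sum_list ks \<notin> set ks"
    and "16 * int (length ks) ^ 3 \<le> N"
    and "N * kmaxj ks 3 < \<bar>sum_list ks\<bar>"
    and "N * kmaxj ks 3 ^ 2 * kmaxj ks 4 < kmax ks ^ 2"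
  shows "kmax ks ^ 2 \<le> 4 * \<bar>Hn ks\<bar>"
proof -
  obtain ys where ys: "mset ys = mset ks" "abs_sorted_desc ys" by (rule abs_sorted_desc_perm)
  have len: "length ys = length ks" using mset_eq_length[OF ys(1)] .
  with assms(1) have "4 \<le> length ys" by simp
  then obtain a b y z zs where ys_eq: "ys = a # b # y # z # zs"
    by (auto simp: numeral_eq_Suc Suc_le_length_iff)
  have set_ks: "set ks = set ys" using ys(1) by (metis mset_eq_setD)
  have sum_ks: "sum_list ks = a + b + sum_list (y # z # zs)"
    using sum_list_mset[OF ys(1)] ys_eq by simp
  have kmax: "kmax ks = \<bar>a\<bar>" using kmax_mset[OF ys(1)] kmax_abs_sorted_desc ys(2) ys_eq by simp
  have "kmaxj ks 3 = \<bar>y\<bar>" "kmaxj ks 4 = \<bar>z\<bar>"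
    using kmaxj_mset[OF ys(1)] kmaxj_abs_sorted_desc[OF ys(2)] ys_eq by simp_all
  moreover have "16 * int (length (y # z # zs)) ^ 3 \<le> N"
  proof -
    have "int (length (y # z # zs)) \<le> int (length ks)" using len ys_eq by simp
    then have "int (length (y # z # zs)) ^ 3 \<le> int (length ks) ^ 3" by (intro power_mono) auto
    then show ?thesis using assms(4) by linarith
  qed
  ultimately have "a ^ 2 \<le> 4 * \<bar>Hn ys\<bar>"
    using sq_le_Hn_abs_sorted_desc[of a b y z zs N] ys(2) assms(2,3,5,6) set_ks sum_ks kmax ys_eq
    by (force simp: mult.assoc)
  then show ?thesis using kmax Hn_mset[OF ys(1)] by simp
qed

lemma inverse_of_int_mult_le_of_int_iff:
  assumes "0 < N"
  shows "1 / real_of_int N * real_of_int x \<le> real_of_int y \<longleftrightarrow> x \<le> N * y"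
  using assms by (simp add: field_simps flip: of_int_mult)

theorem proposition2:
  fixes n :: nat
  assumes "n \<ge> 2"
  shows "\<exists>c::real. c > 0 \<and>
    (\<forall>ks :: int list. length ks = n \<and> (\<forall>x\<in>set ks. x \<noteq> 0) \<and> sum_list ks \<noteq> 0 \<longrightarrow>
      (n = 2 \<longrightarrow> \<bar>real_of_int (Hn ks)\<bar> \<ge> c * real_of_int (kmax ks) ^ 2) \<and>
      (n = 3 \<longrightarrow>
         \<bar>real_of_int (Hn ks)\<bar> \<ge> c * real_of_int (kmax ks) ^ 2 \<or>
         (\<exists>j0<n. ks ! j0 = sum_list ks) \<or>
         (\<forall>j<n. real_of_int \<bar>ks ! j\<bar> \<ge> c * real_of_int \<bar>sum_list ks\<bar>)) \<and>
      (n \<ge> 4 \<longrightarrow>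
         \<bar>real_of_int (Hn ks)\<bar> \<ge> c * real_of_int (kmax ks) ^ 2 \<or>
         (\<exists>j0<n. sum_list ks = ks ! j0) \<or>
         real_of_int (kmaxj ks 3) \<ge> c * real_of_int \<bar>sum_list ks\<bar> \<or>
         real_of_int (kmaxj ks 3) ^ 2 * real_of_int (kmaxj ks 4) \<ge> c * real_of_int (kmax ks) ^ 2))"
proof -
  define N :: int where "N = 16 * int n ^ 3"
  have "8 \<le> int n ^ 3" using power_mono[of 2 "int n" 3] assms by simp
  then have "128 \<le> N" by (simp add: N_def)
  have Hn_bound: "kmax ks ^ 2 \<le> N * \<bar>Hn ks\<bar>" if "kmax ks ^ 2 \<le> 4 * \<bar>Hn ks\<bar>" for ks
    using that \<open>128 \<le> N\<close> mult_right_mono[of 4 N "\<bar>Hn ks\<bar>"] by simp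
  have scaled: "1 / real_of_int N * real_of_int x \<le> real_of_int y \<longleftrightarrow> x \<le> N * y" for x y
    using inverse_of_int_mult_le_of_int_iff \<open>128 \<le> N\<close> by simp
  show ?thesis
    apply (rule exI[of _ "1 / real_of_int N"])
    apply (simp only: of_int_power[symmetric] of_int_abs[symmetric] of_int_mult[symmetric] scaled)
    apply (intro conjI allI impI)
    subgoal using \<open>128 \<le> N\<close> by simp
    subgoal for ks using kmax_sq_le_Hn_length_2[of ks] Hn_bound by simp
    subgoal for ks using kmax_sq_le_Hn_length_3[of ks N] Hn_bound \<open>128 \<le> N\<close>
      by (force simp: in_set_conv_nth not_le)
    subgoal for ks using kmax_sq_le_Hn_length_ge_4[of ks N] Hn_bound
      by (force simp: in_set_conv_nth not_le N_def)
    done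
qed

end
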